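(* Let $L$ be a frame, $X_L$ its Priestley space, and $Y_L$ the spatial part of $X_L$. Then $L$ is a Stone frame if and only if $X_L$ is a Stone L-space. If in addition $L$ is spatial, these conditions are equivalent to $Y_L$ being a Stone space.
   Context: A frame is a complete lattice satisfying $a\wedge\bigvee S=\bigvee\{a\wedge s\mid s\in S\}$. In a frame $L$, $a\ll b$ means whenever $b\le\bigvee S$ there is finite $T\subseteq S$ with $a\le\bigvee T$; $L$ is compact if $1\ll 1$. The pseudocomplement is $a^*=\bigvee\{x\mid a\wedge x=0\}$; $a$ is complemented if $a\vee a^*=1$. $L$ is zero-dimensional if each element is the join of the complemented elements below it; a Stone frame is a compact zero-dimensional frame. $L$ is spatial if completely prime filters separate its elements. A Priestley space is a Stone space $X$ with a partial order such that clopen upsets separate points. An L-space is a Priestley space in which the downset of each clopen set is clopen and the closure of each open upset is open. ${\sf ClopUp}(X)$ is the set of clopen upsets; $\mathrm{cl}$ denotes closure. The Priestley space $X_L$ is the set of prime filters of $L$ ordered by inclusion with topology generated by the sets $\varphi(a)=\{x\mid a\in x\}$ and their complements. The spatial part of $X$ is $Y=\{y\in X\mid{\downarrow}y\text{ clopen}\}$, topologized by declaring $V\subseteq Y$ open iff $V=U\cap Y$ for some $U\in{\sf ClopUp}(X)$. For $U,V\in{\sf ClopUp}(X)$, $V\ll U$ means that for every open upset $W$, $U\subseteq\mathrm{cl}\,W$ implies $V\subseteq W$; $\ker U=\bigcup\{V\in{\sf ClopUp}(X)\mid V\ll U\}$; $X$ is L-compact if $X=\ker X$. A biset is a set that is both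 an upset and a downset; ${\sf ClopBi}(X)$ is the set of clopen bisets; $\mathrm{cen}\,U=\bigcup\{V\in{\sf ClopBi}(X)\mid V\subseteq U\}$. A Stone L-space is an L-compact L-space with $\mathrm{cen}\,U$ dense in $U$ for each $U\in{\sf ClopUp}(X)$. A Stone space is a compact Hausdorff zero-dimensional space. *)

theory Defs
  imports "HOL-Analysis.Analysis"
begin

section \<open>Frames (the frame is the whole carrier type 'a :: complete_lattice)\<close>

definition frame :: "'a::complete_lattice itself \<Rightarrow> bool" where
  "frame (_::'a itself) \<longleftrightarrow> (\<forall>(a::'a) S. inf a (Sup S) = (SUP s\<in>S. inf a s))"

definition way_below :: "'a::complete_lattice \<Rightarrow> 'a \<Rightarrow> bool" where
  "way_below a b \<longleftrightarrow> (\<forall>S. b \<le> Sup S \<longrightarrow> (\<exists>T. finite T \<and> T \<subseteq> S \<and> a \<le> Sup T))"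

definition compact_frame :: "'a::complete_lattice itself \<Rightarrow> bool" where
  "compact_frame (_::'a itself) \<longleftrightarrow> way_below (top::'a) top"

definition pseudocompl :: "'a::complete_lattice \<Rightarrow> 'a" where
  "pseudocompl a = Sup {x. inf a x = bot}"

definition complemented :: "'a::complete_lattice \<Rightarrow> bool" where
  "complemented a \<longleftrightarrow> sup a (pseudocompl a) = top"

definition zero_dim_frame :: "'a::complete_lattice itself \<Rightarrow> bool" where
  "zero_dim_frame (_::'a itself) \<longleftrightarrow> (\<forall>a::'a. a = Sup {c. complemented c \<and> c \<le> a})"

definition stone_frame :: "'a::complete_lattice itself \<Rightarrow> bool" where
  "stone_frame T \<longleftrightarrow> compact_frame T \<and> zero_dim_frame T"

definition is_filter :: "'a::complete_lattice set \<Rightarrow> bool" where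
  "is_filter F \<longleftrightarrow> top \<in> F \<and> (\<forall>a\<in>F. \<forall>b. a \<le> b \<longrightarrow> b \<in> F) \<and> (\<forall>a\<in>F. \<forall>b\<in>F. inf a b \<in> F)"

definition prime_filter :: "'a::complete_lattice set \<Rightarrow> bool" where
  "prime_filter F \<longleftrightarrow> is_filter F \<and> bot \<notin> F \<and> (\<forall>a b. sup a b \<in> F \<longrightarrow> a \<in> F \<or> b \<in> F)"

definition completely_prime_filter :: "'a::complete_lattice set \<Rightarrow> bool" where
  "completely_prime_filter F \<longleftrightarrow> is_filter F \<and> bot \<notin> F \<and> (\<forall>S. Sup S \<in> F \<longrightarrow> (\<exists>s\<in>S. s \<in> F))"

definition spatial_frame :: "'a::complete_lattice itself \<Rightarrow> bool" where
  "spatial_frame (_::'a itself) \<longleftrightarrow>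
     (\<forall>a b::'a. a \<noteq> b \<longrightarrow> (\<exists>F. completely_prime_filter F \<and> (a \<in> F \<longleftrightarrow> b \<notin> F)))"

definition clopen :: "'p topology \<Rightarrow> 'p set \<Rightarrow> bool" where
  "clopen T U \<longleftrightarrow> openin T U \<and> closedin T U"

definition upset :: "'p topology \<Rightarrow> ('p \<Rightarrow> 'p \<Rightarrow> bool) \<Rightarrow> 'p set \<Rightarrow> bool" where
  "upset T le U \<longleftrightarrow> U \<subseteq> topspace T \<and> (\<forall>x\<in>U. \<forall>y\<in>topspace T. le x y \<longrightarrow> y \<in> U)"

definition downset :: "'p topology \<Rightarrow> ('p \<Rightarrow> 'p \<Rightarrow> bool) \<Rightarrow> 'p set \<Rightarrow> bool" where
  "downset T le U \<longleftrightarrow> U \<subseteq> topspace T \<and> (\<forall>x\<in>U. \<forall>y\<in>topspace T. le y x \<longrightarrow> y \<in> U)"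

definition down :: "'p topology \<Rightarrow> ('p \<Rightarrow> 'p \<Rightarrow> bool) \<Rightarrow> 'p set \<Rightarrow> 'p set" where
  "down T le A = {y \<in> topspace T. \<exists>x\<in>A. le y x}"

definition ClopUp :: "'p topology \<Rightarrow> ('p \<Rightarrow> 'p \<Rightarrow> bool) \<Rightarrow> 'p set set" where
  "ClopUp T le = {U. clopen T U \<and> upset T le U}"

definition ClopBi :: "'p topology \<Rightarrow> ('p \<Rightarrow> 'p \<Rightarrow> bool) \<Rightarrow> 'p set set" where
  "ClopBi T le = {U. clopen T U \<and> upset T le U \<and> downset T le U}"

definition stone_space :: "'p topology \<Rightarrow> bool" where
  "stone_space T \<longleftrightarrow> compact_space T \<and> Hausdorff_space T \<and> T dim_le 0"

definition partial_order_on_space :: "'p topology \<Rightarrow> ('p \<Rightarrow> 'p \<Rightarrow> bool) \<Rightarrow> bool" where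
  "partial_order_on_space T le \<longleftrightarrow>
     (\<forall>x\<in>topspace T. le x x) \<and>
     (\<forall>x\<in>topspace T. \<forall>y\<in>topspace T. le x y \<and> le y x \<longrightarrow> x = y) \<and>
     (\<forall>x\<in>topspace T. \<forall>y\<in>topspace T. \<forall>z\<in>topspace T. le x y \<and> le y z \<longrightarrow> le x z)"

definition priestley_space :: "'p topology \<Rightarrow> ('p \<Rightarrow> 'p \<Rightarrow> bool) \<Rightarrow> bool" where
  "priestley_space T le \<longleftrightarrow> stone_space T \<and> partial_order_on_space T le \<and>
     (\<forall>x\<in>topspace T. \<forall>y\<in>topspace T. \<not> le x y \<longrightarrow> (\<exists>U\<in>ClopUp T le. x \<in> U \<and> y \<notin> U))"

definition L_space :: "'p topology \<Rightarrow> ('p \<Rightarrow> 'p \<Rightarrow> bool) \<Rightarrow> bool" where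
  "L_space T le \<longleftrightarrow> priestley_space T le \<and>
     (\<forall>U. clopen T U \<longrightarrow> clopen T (down T le U)) \<and>
     (\<forall>W. openin T W \<and> upset T le W \<longrightarrow> openin T (T closure_of W))"

definition way_below_sp :: "'p topology \<Rightarrow> ('p \<Rightarrow> 'p \<Rightarrow> bool) \<Rightarrow> 'p set \<Rightarrow> 'p set \<Rightarrow> bool" where
  "way_below_sp T le V U \<longleftrightarrow>
     (\<forall>W. openin T W \<and> upset T le W \<and> U \<subseteq> T closure_of W \<longrightarrow> V \<subseteq> W)"

definition ker :: "'p topology \<Rightarrow> ('p \<Rightarrow> 'p \<Rightarrow> bool) \<Rightarrow> 'p set \<Rightarrow> 'p set" where
  "ker T le U = \<Union>{V \<in> ClopUp T le. way_below_sp T le V U}"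

definition L_compact :: "'p topology \<Rightarrow> ('p \<Rightarrow> 'p \<Rightarrow> bool) \<Rightarrow> bool" where
  "L_compact T le \<longleftrightarrow> topspace T = ker T le (topspace T)"

definition cen :: "'p topology \<Rightarrow> ('p \<Rightarrow> 'p \<Rightarrow> bool) \<Rightarrow> 'p set \<Rightarrow> 'p set" where
  "cen T le U = \<Union>{V \<in> ClopBi T le. V \<subseteq> U}"

definition stone_L_space :: "'p topology \<Rightarrow> ('p \<Rightarrow> 'p \<Rightarrow> bool) \<Rightarrow> bool" where
  "stone_L_space T le \<longleftrightarrow> L_space T le \<and> L_compact T le \<and>
     (\<forall>U\<in>ClopUp T le. cen T le U \<subseteq> U \<and> U \<subseteq> T closure_of (cen T le U))"

definition phi :: "'a::complete_lattice \<Rightarrow> 'a set set" where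
  "phi a = {x. prime_filter x \<and> a \<in> x}"

definition XL_points :: "'a::complete_lattice itself \<Rightarrow> 'a set set" where
  "XL_points (_::'a itself) = {x::'a set. prime_filter x}"

definition XL :: "'a::complete_lattice itself \<Rightarrow> 'a set topology" where
  "XL A = topology_generated_by ((\<lambda>a. phi a) ` UNIV \<union> (\<lambda>a. XL_points A - phi a) ` UNIV)"

definition spatial_points :: "'p topology \<Rightarrow> ('p \<Rightarrow> 'p \<Rightarrow> bool) \<Rightarrow> 'p set" where
  "spatial_points T le = {y \<in> topspace T. clopen T (down T le {y})}"

text \<open>Topology on the spatial part: opens are the traces of clopen upsets
  (taken as generating family; for X_L it is already a topology).\<close>
definition spatial_part :: "'p topology \<Rightarrow> ('p \<Rightarrow> 'p \<Rightarrow> bool) \<Rightarrow> 'p topology" where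
  "spatial_part T le = topology_generated_by ((\<lambda>U. U \<inter> spatial_points T le) ` ClopUp T le)"

end

theory Submission
  imports Defs
begin

text \<open>
  By the prime filter theorem, \<open>a \<mapsto> \<phi>(a)\<close> is an order embedding of \<open>L\<close> into the clopen
  upsets of \<open>X\<^sub>L\<close>, and compactness of \<open>X\<^sub>L\<close> shows that it is onto them and that every
  open upset is a union of sets \<open>\<phi>(a)\<close> whose closure is \<open>\<phi>\<close> of their join. This dictionary
  turns the conditions defining a Stone L-space into conditions on \<open>L\<close>: \<open>\<phi>(a) \<ll> \<phi>(b)\<close> iff
  \<open>a \<ll> b\<close>, so L-compactness says \<open>1 \<ll> 1\<close>; the clopen bisets are the \<open>\<phi>(c)\<close> with \<open>c\<close>
  complemented, so density of \<open>cen \<phi>(a)\<close> in \<open>\<phi>(a)\<close> says that \<open>a\<close> is the join of the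
  complemented elements below it.

  A point of \<open>X\<^sub>L\<close> has a clopen downset iff it is a completely prime filter \<open>y\<close>
  (the downset is then the complement of \<open>\<phi>(\<Or>(L - y))\<close>), so the opens of \<open>Y\<^sub>L\<close> are the
  traces \<open>\<phi>(a) \<inter> Y\<^sub>L\<close>. When \<open>L\<close> is spatial these traces determine the order of \<open>L\<close>, and
  compactness and zero-dimensionality of \<open>Y\<^sub>L\<close> translate into those of \<open>L\<close>; the Hausdorff
  property then comes for free from the complemented elements.
\<close>

lemma frame_inf_Sup:
  "frame TYPE('a::complete_lattice) \<Longrightarrow> inf (a::'a) (Sup S) = (SUP s\<in>S. inf a s)"
  unfolding frame_def by blast

lemma frame_inf_sup:
  "frame TYPE('a::complete_lattice) \<Longrightarrow> inf (a::'a) (sup b c) = sup (inf a b) (inf a c)"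
  using frame_inf_Sup[of a "{b, c}"] by simp

definition himp :: "'a::complete_lattice \<Rightarrow> 'a \<Rightarrow> 'a" where
  "himp a b = Sup {x. inf x a \<le> b}"

lemma le_himp_iff:
  assumes "frame TYPE('a::complete_lattice)"
  shows "(c::'a) \<le> himp a b \<longleftrightarrow> inf c a \<le> b"
proof
  assume "c \<le> himp a b"
  then have "inf c a \<le> inf a (Sup {x. inf x a \<le> b})"
    unfolding himp_def by (simp add: inf_commute le_infI2)
  also have "\<dots> = (SUP x\<in>{x. inf x a \<le> b}. inf a x)"
    using frame_inf_Sup[OF assms] by blast
  also have "\<dots> \<le> b"
    by (auto intro!: SUP_least simp: inf_commute)
  finally show "inf c a \<le> b" .
qed (simp add: himp_def Sup_upper)

lemma inf_pseudocompl:
  assumes "frame TYPE('a::complete_lattice)"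
  shows "inf (a::'a) (pseudocompl a) = bot"
proof -
  have "inf a (pseudocompl a) = (SUP x\<in>{x. inf a x = bot}. inf a x)"
    unfolding pseudocompl_def by (rule frame_inf_Sup[OF assms])
  also have "\<dots> \<le> bot"
    by (rule SUP_least) simp
  finally show ?thesis
    by (rule bot_unique[THEN iffD1])
qed

lemma complementedI:
  assumes "inf c d = bot" and "top \<le> sup c d"
  shows "complemented (c::'a::complete_lattice)"
proof -
  have "d \<le> pseudocompl c"
    unfolding pseudocompl_def using assms(1) by (simp add: Sup_upper)
  then have "sup c d \<le> sup c (pseudocompl c)"
    by (rule sup_mono[OF order_refl])
  with assms(2) have "top \<le> sup c (pseudocompl c)"
    by (rule order_trans)
  then show ?thesis
    unfolding complemented_def by (rule top_unique[THEN iffD1])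
qed

lemma way_below_mono:
  assumes "(c::'a::complete_lattice) \<le> a" and "way_below a b"
  shows "way_below c b"
  unfolding way_below_def
proof (intro allI impI)
  fix S assume "b \<le> Sup S"
  then obtain T where "finite T" "T \<subseteq> S" "a \<le> Sup T"
    using assms(2) unfolding way_below_def by blast
  then show "\<exists>T. finite T \<and> T \<subseteq> S \<and> c \<le> Sup T"
    using assms(1) order_trans by blast
qed

lemma way_below_bot: "way_below (bot::'a::complete_lattice) b"
  unfolding way_below_def by (intro allI impI exI[of _ "{}"]) simp

lemma way_below_sup:
  assumes "way_below a b" and "way_below c (b::'a::complete_lattice)"
  shows "way_below (sup a c) b"
  unfolding way_below_def
proof (intro allI impI)
  fix S assume S: "b \<le> Sup S"
  obtain T1 T2 where "finite T1" "T1 \<subseteq> S" "a \<le> Sup T1" "finite T2" "T2 \<subseteq> S" "c \<le> Sup T2"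
    using assms S unfolding way_below_def by meson
  then show "\<exists>T. finite T \<and> T \<subseteq> S \<and> sup a c \<le> Sup T"
    by (intro exI[of _ "T1 \<union> T2"]) (simp add: Sup_union_distrib le_supI1 le_supI2)
qed

lemma way_below_Sup_finite:
  assumes "finite A" and "\<forall>a\<in>A. way_below a (b::'a::complete_lattice)"
  shows "way_below (Sup A) b"
  using assms by (induction A rule: finite_induct) (simp_all add: way_below_bot way_below_sup)

lemma zero_dim_frame_iff:
  "zero_dim_frame TYPE('a::complete_lattice) \<longleftrightarrow> (\<forall>a::'a. a \<le> Sup {c. complemented c \<and> c \<le> a})"
proof -
  have Sup_below: "Sup {c. complemented c \<and> c \<le> a} \<le> a" for a :: 'a
    by (rule Sup_least) simp
  show ?thesis
    unfolding zero_dim_frame_def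
  proof (intro iffI allI)
    fix a :: 'a
    assume "\<forall>a::'a. a = Sup {c. complemented c \<and> c \<le> a}"
    then show "a \<le> Sup {c. complemented c \<and> c \<le> a}"
      by (intro eq_refl) blast
  next
    fix a :: 'a
    assume "\<forall>a::'a. a \<le> Sup {c. complemented c \<and> c \<le> a}"
    then show "a = Sup {c. complemented c \<and> c \<le> a}"
      using Sup_below by (intro antisym) blast+
  qed
qed

section \<open>Prime filters\<close>

lemma prime_filter_top: "prime_filter p \<Longrightarrow> top \<in> p"
  by (simp add: prime_filter_def is_filter_def)

lemma prime_filter_bot: "prime_filter p \<Longrightarrow> bot \<notin> p"
  by (simp add: prime_filter_def)

lemma prime_filter_up: "prime_filter p \<Longrightarrow> a \<in> p \<Longrightarrow> a \<le> b \<Longrightarrow> b \<in> p"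
  by (auto simp add: prime_filter_def is_filter_def)

lemma prime_filter_inf_iff: "prime_filter p \<Longrightarrow> inf a b \<in> p \<longleftrightarrow> a \<in> p \<and> b \<in> p"
  by (auto simp add: prime_filter_def is_filter_def)

lemma prime_filter_sup_iff: "prime_filter p \<Longrightarrow> sup a b \<in> p \<longleftrightarrow> a \<in> p \<or> b \<in> p"
  by (auto simp add: prime_filter_def is_filter_def)

lemma prime_filter_Inf_finite:
  assumes "prime_filter p" and "finite A" and "A \<subseteq> p"
  shows "Inf A \<in> p"
  using assms(2,1,3) by (induction A rule: finite_induct) (auto simp: prime_filter_top prime_filter_inf_iff)

lemma prime_filter_Sup_finite_iff:
  assumes "prime_filter p" and "finite A"
  shows "Sup A \<in> p \<longleftrightarrow> (\<exists>a\<in>A. a \<in> p)"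
  using assms(2,1) by (induction A rule: finite_induct) (auto simp: prime_filter_bot prime_filter_sup_iff)

lemma prime_filter_Sup: "prime_filter p \<Longrightarrow> a \<in> A \<Longrightarrow> a \<in> p \<Longrightarrow> Sup A \<in> p"
  by (meson Sup_upper prime_filter_up)

lemma prime_filter_pseudocompl_iff:
  assumes "frame TYPE('a::complete_lattice)" and "complemented (c::'a)" and "prime_filter p"
  shows "pseudocompl c \<in> p \<longleftrightarrow> c \<notin> p"
proof -
  have "sup c (pseudocompl c) \<in> p"
    using assms(2,3) by (simp add: complemented_def prime_filter_top)
  moreover have "\<not> (c \<in> p \<and> pseudocompl c \<in> p)"
  proof
    assume "c \<in> p \<and> pseudocompl c \<in> p"
    then have "inf c (pseudocompl c) \<in> p"
      using prime_filter_inf_iff[OF assms(3)] by blast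
    then show False
      using inf_pseudocompl[OF assms(1)] prime_filter_bot[OF assms(3)] by simp
  qed
  ultimately show ?thesis
    using prime_filter_sup_iff[OF assms(3)] by blast
qed

lemma completely_prime_filter_imp_prime:
  assumes "completely_prime_filter p"
  shows "prime_filter p"
proof -
  have "a \<in> p \<or> b \<in> p" if "sup a b \<in> p" for a b
  proof -
    have "Sup {a, b} \<in> p" using that by simp
    then show ?thesis using assms unfolding completely_prime_filter_def by blast
  qed
  then show ?thesis
    using assms by (simp add: completely_prime_filter_def prime_filter_def)
qed

lemma completely_prime_filter_Sup_iff:
  "completely_prime_filter p \<Longrightarrow> Sup A \<in> p \<longleftrightarrow> (\<exists>a\<in>A. a \<in> p)"
  using completely_prime_filter_imp_prime prime_filter_Sup unfolding completely_prime_filter_def by blast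

lemma is_filter_extend:
  assumes "is_filter G"
  shows "is_filter {x. \<exists>g\<in>G. inf g a \<le> x}"
  unfolding is_filter_def
proof (intro conjI ballI allI impI)
  show "top \<in> {x. \<exists>g\<in>G. inf g a \<le> x}"
    using assms by (auto simp: is_filter_def)
next
  fix x y assume "x \<in> {x. \<exists>g\<in>G. inf g a \<le> x}" "x \<le> y"
  then show "y \<in> {x. \<exists>g\<in>G. inf g a \<le> x}" by (auto intro: order_trans)
next
  fix x y assume "x \<in> {x. \<exists>g\<in>G. inf g a \<le> x}" "y \<in> {x. \<exists>g\<in>G. inf g a \<le> x}"
  then obtain g1 g2 where "g1 \<in> G" "g2 \<in> G" "inf g1 a \<le> x" "inf g2 a \<le> y" by auto
  moreover have "inf (inf g1 g2) a \<le> inf x y"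
    using calculation by (meson inf_le1 inf_le2 inf_mono le_inf_iff order_trans)
  moreover have "inf g1 g2 \<in> G" using calculation assms by (auto simp: is_filter_def)
  ultimately show "inf x y \<in> {x. \<exists>g\<in>G. inf g a \<le> x}" by blast
qed

lemma is_filter_Union_chain:
  assumes "\<C> \<noteq> {}" and "\<forall>G\<in>\<C>. is_filter G" and "\<forall>A\<in>\<C>. \<forall>B\<in>\<C>. A \<subseteq> B \<or> B \<subseteq> A"
  shows "is_filter (\<Union>\<C>)"
  unfolding is_filter_def
proof (intro conjI ballI allI impI)
  show "top \<in> \<Union>\<C>"
    using assms(1,2) unfolding is_filter_def by blast
next
  fix a b assume "a \<in> \<Union>\<C>" "a \<le> b"
  then show "b \<in> \<Union>\<C>"
    using assms(2) unfolding is_filter_def by blast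
next
  fix a b assume "a \<in> \<Union>\<C>" "b \<in> \<Union>\<C>"
  then obtain A B where AB: "A \<in> \<C>" "B \<in> \<C>" "a \<in> A" "b \<in> B" by blast
  then consider "A \<subseteq> B" | "B \<subseteq> A" using assms(3) by blast
  then show "inf a b \<in> \<Union>\<C>"
  proof cases
    case 1
    then have "inf a b \<in> B" using AB assms(2) unfolding is_filter_def by blast
    then show ?thesis using AB by blast
  next
    case 2
    then have "inf a b \<in> A" using AB assms(2) unfolding is_filter_def by blast
    then show ?thesis using AB by blast
  qed
qed

lemma completely_prime_filter_iff_Sup_compl:
  assumes "prime_filter p"
  shows "completely_prime_filter p \<longleftrightarrow> Sup (- p) \<notin> p"
proof
  assume "completely_prime_filter p"
  then show "Sup (- p) \<notin> p"
    by (auto simp: completely_prime_filter_Sup_iff)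
next
  assume Sup_notin: "Sup (- p) \<notin> p"
  have "\<exists>s\<in>S. s \<in> p" if "Sup S \<in> p" for S
  proof (rule ccontr)
    assume "\<not> (\<exists>s\<in>S. s \<in> p)"
    then have "Sup S \<le> Sup (- p)"
      by (intro Sup_subset_mono) blast
    then show False
      using that Sup_notin prime_filter_up[OF assms] by blast
  qed
  then show "completely_prime_filter p"
    using assms unfolding completely_prime_filter_def prime_filter_def by blast
qed

lemma completely_prime_filter_complemented_below:
  assumes "zero_dim_frame TYPE('a::complete_lattice)" and "completely_prime_filter y" and "(a::'a) \<in> y"
  shows "\<exists>c. complemented c \<and> c \<le> a \<and> c \<in> y"
proof -
  have "a \<le> Sup {c. complemented c \<and> c \<le> a}"
    using assms(1) zero_dim_frame_iff by blast
  then have "Sup {c. complemented c \<and> c \<le> a} \<in> y"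
    using assms(2,3) completely_prime_filter_imp_prime prime_filter_up by blast
  then show ?thesis
    using assms(2) by (auto simp: completely_prime_filter_Sup_iff)
qed

lemma spatial_frame_leI:
  assumes sp: "spatial_frame TYPE('a::complete_lattice)"
    and le: "\<And>y. completely_prime_filter y \<Longrightarrow> (a::'a) \<in> y \<Longrightarrow> b \<in> y"
  shows "a \<le> b"
proof (rule ccontr)
  assume "\<not> a \<le> b"
  then have "a \<noteq> inf a b"
    by (metis inf.orderI)
  then obtain F where F: "completely_prime_filter F" "a \<in> F \<longleftrightarrow> inf a b \<notin> F"
    using sp unfolding spatial_frame_def by blast
  then have "inf a b \<in> F \<longleftrightarrow> a \<in> F \<and> b \<in> F"
    using prime_filter_inf_iff completely_prime_filter_imp_prime by blast
  then show False
    using F le by blast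
qed

definition generated_filter :: "'a::complete_lattice set \<Rightarrow> 'a set" where
  "generated_filter B = {x. \<exists>B0. finite B0 \<and> B0 \<subseteq> B \<and> Inf B0 \<le> x}"

definition generated_ideal :: "'a::complete_lattice set \<Rightarrow> 'a set" where
  "generated_ideal A = {x. \<exists>A0. finite A0 \<and> A0 \<subseteq> A \<and> x \<le> Sup A0}"

lemma is_filter_generated_filter: "is_filter (generated_filter B)"
  unfolding is_filter_def
proof (intro conjI ballI allI impI)
  show "top \<in> generated_filter B"
    unfolding generated_filter_def by (intro CollectI exI[of _ "{}"]) simp
next
  fix x y assume "x \<in> generated_filter B" "x \<le> y"
  then obtain B0 where "finite B0" "B0 \<subseteq> B" "Inf B0 \<le> x"
    unfolding generated_filter_def by blast
  moreover from this(3) \<open>x \<le> y\<close> have "Inf B0 \<le> y"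
    by (rule order_trans)
  ultimately show "y \<in> generated_filter B"
    unfolding generated_filter_def by blast
next
  fix x y assume "x \<in> generated_filter B" "y \<in> generated_filter B"
  then obtain B1 B2 where "finite B1" "B1 \<subseteq> B" "Inf B1 \<le> x" "finite B2" "B2 \<subseteq> B" "Inf B2 \<le> y"
    unfolding generated_filter_def by blast
  then show "inf x y \<in> generated_filter B"
    unfolding generated_filter_def
    by (intro CollectI exI[of _ "B1 \<union> B2"]) (simp add: Inf_union_distrib le_infI1 le_infI2)
qed

lemma subset_generated_filter: "B \<subseteq> generated_filter B"
proof
  fix b assume "b \<in> B"
  then show "b \<in> generated_filter B"
    unfolding generated_filter_def by (intro CollectI exI[of _ "{b}"]) simp
qed

lemma generated_ideal_down: "x \<le> y \<Longrightarrow> y \<in> generated_ideal A \<Longrightarrow> x \<in> generated_ideal A"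
  unfolding generated_ideal_def using order_trans by blast

lemma generated_ideal_sup:
  assumes "x \<in> generated_ideal A" and "y \<in> generated_ideal A"
  shows "sup x y \<in> generated_ideal A"
proof -
  obtain A1 where A1: "finite A1" "A1 \<subseteq> A" "x \<le> Sup A1"
    using assms(1) unfolding generated_ideal_def by blast
  obtain A2 where A2: "finite A2" "A2 \<subseteq> A" "y \<le> Sup A2"
    using assms(2) unfolding generated_ideal_def by blast
  from A1(3) A2(3) have "sup x y \<le> Sup (A1 \<union> A2)"
    by (simp add: Sup_union_distrib le_supI1 le_supI2)
  then show ?thesis
    unfolding generated_ideal_def using A1 A2 by blast
qed

lemma subset_generated_ideal: "A \<subseteq> generated_ideal A"
proof
  fix a assume "a \<in> A"
  then show "a \<in> generated_ideal A"
    unfolding generated_ideal_def by (intro CollectI exI[of _ "{a}"]) simp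
qed

lemma bot_in_generated_ideal: "bot \<in> generated_ideal A"
  unfolding generated_ideal_def by (intro CollectI exI[of _ "{}"]) simp

lemma maximal_filter_is_prime:
  assumes fr: "frame TYPE('a::complete_lattice)"
    and G: "is_filter G" "G \<inter> generated_ideal A = {}"
    and max: "\<And>H. is_filter H \<Longrightarrow> G \<subseteq> H \<Longrightarrow> H \<inter> generated_ideal A = {} \<Longrightarrow> H = G"
  shows "prime_filter (G::'a set)"
proof -
  have ext: "\<exists>g\<in>G. inf g a \<in> generated_ideal A" if "a \<notin> G" for a
  proof (rule ccontr)
    assume none: "\<not> (\<exists>g\<in>G. inf g a \<in> generated_ideal A)"
    define H where "H = {x. \<exists>g\<in>G. inf g a \<le> x}"
    have "is_filter H"
      unfolding H_def using G(1) by (rule is_filter_extend)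
    moreover have "G \<subseteq> H"
      unfolding H_def by (blast intro: inf_le1)
    moreover have "H \<inter> generated_ideal A = {}"
      unfolding H_def using none generated_ideal_down by blast
    ultimately have "H = G"
      by (rule max)
    moreover have "top \<in> G" and "inf top a \<le> a"
      using G(1) unfolding is_filter_def by simp_all
    then have "a \<in> H"
      unfolding H_def by blast
    ultimately show False
      using that by blast
  qed
  have "a \<in> G \<or> b \<in> G" if ab: "sup a b \<in> G" for a b
  proof (rule ccontr)
    assume "\<not> (a \<in> G \<or> b \<in> G)"
    then obtain g1 g2 where g: "g1 \<in> G" "inf g1 a \<in> generated_ideal A" "g2 \<in> G" "inf g2 b \<in> generated_ideal A"
      using ext by meson
    have "inf (inf g1 g2) (sup a b) \<in> G"
      using g ab G(1) unfolding is_filter_def by blast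
    moreover have "inf (inf g1 g2) (sup a b) \<le> sup (inf g1 a) (inf g2 b)"
      unfolding frame_inf_sup[OF fr] by (intro sup_mono inf_mono) simp_all
    then have "inf (inf g1 g2) (sup a b) \<in> generated_ideal A"
      using generated_ideal_down generated_ideal_sup[OF g(2,4)] by blast
    ultimately show False
      using G(2) by blast
  qed
  then show ?thesis
    using G bot_in_generated_ideal unfolding prime_filter_def by blast
qed

lemma prime_filter_separation:
  assumes fr: "frame TYPE('a::complete_lattice)"
    and disj: "\<And>B0 A0. finite B0 \<Longrightarrow> B0 \<subseteq> B \<Longrightarrow> finite A0 \<Longrightarrow> A0 \<subseteq> A \<Longrightarrow> \<not> Inf B0 \<le> Sup (A0::'a set)"
  shows "\<exists>p. prime_filter p \<and> B \<subseteq> p \<and> p \<inter> A = {}"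
proof -
  define \<A> where "\<A> = {G. is_filter G \<and> B \<subseteq> G \<and> G \<inter> generated_ideal A = {}}"
  have "generated_filter B \<inter> generated_ideal A = {}"
    unfolding generated_filter_def generated_ideal_def using disj order_trans by blast
  then have "generated_filter B \<in> \<A>"
    unfolding \<A>_def using is_filter_generated_filter subset_generated_filter by blast
  moreover have "\<Union>\<C> \<in> \<A>" if "\<C> \<noteq> {}" and "subset.chain \<A> \<C>" for \<C>
  proof -
    have "\<C> \<subseteq> \<A>" and "\<forall>G\<in>\<C>. \<forall>H\<in>\<C>. G \<subseteq> H \<or> H \<subseteq> G"
      using that(2) unfolding subset_chain_def by blast+
    then show ?thesis
      using that(1) is_filter_Union_chain[of \<C>] unfolding \<A>_def by blast
  qed
  ultimately obtain G where "G \<in> \<A>" and max: "\<forall>H\<in>\<A>. G \<subseteq> H \<longrightarrow> H = G"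
    using subset_Zorn_nonempty[of \<A>] by blast
  then have G: "is_filter G" "B \<subseteq> G" "G \<inter> generated_ideal A = {}"
    unfolding \<A>_def by auto
  have "prime_filter G"
    using fr G(1,3) by (rule maximal_filter_is_prime) (use max G(2) in \<open>auto simp: \<A>_def\<close>)
  then show ?thesis
    using G subset_generated_ideal by blast
qed

lemma prime_filter_separates:
  assumes "frame TYPE('a::complete_lattice)" and "\<not> (a::'a) \<le> b"
  shows "\<exists>p. prime_filter p \<and> a \<in> p \<and> b \<notin> p"
proof -
  have "\<not> Inf B0 \<le> Sup A0"
    if "finite B0" "B0 \<subseteq> {a}" "finite A0" "A0 \<subseteq> {b}" for A0 B0
  proof
    assume "Inf B0 \<le> Sup A0"
    moreover have "a \<le> Inf B0" and "Sup A0 \<le> b"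
      using that by (auto intro: Inf_greatest Sup_least)
    ultimately show False
      using assms(2) order_trans by metis
  qed
  from prime_filter_separation[OF assms(1) this] show ?thesis
    by blast
qed

lemma compactin_indexed_cover:
  assumes "compactin X K" and "K \<subseteq> \<Union>(f ` A)" and "\<And>a. a \<in> A \<Longrightarrow> openin X (f a)"
  shows "\<exists>A0\<subseteq>A. finite A0 \<and> K \<subseteq> \<Union>(f ` A0)"
proof -
  obtain \<F> where "finite \<F>" "\<F> \<subseteq> f ` A" "K \<subseteq> \<Union>\<F>"
    using compactinD[OF assms(1), of "f ` A"] assms(2,3) by blast
  then show ?thesis
    by (metis finite_subset_image)
qed

lemma topology_generated_by_eq_subbase:
  "topology_generated_by \<S> =
     topology (arbitrary union_of (finite intersection_of (\<lambda>x. x \<in> \<S>) relative_to \<Union>\<S>))"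
  (is "_ = ?T")
proof (rule topology_eq[THEN iffD2], intro allI iffI)
  fix U assume "openin (topology_generated_by \<S>) U"
  then have "generate_topology_on \<S> U"
    by (rule openin_topology_generated_by)
  then show "openin ?T U"
  proof induction
    case (Basis s)
    then show ?case
      by (simp add: openin_subbase arbitrary_union_of_inc finite_intersection_of_inc
          relative_to_subset_inc Union_upper)
  qed auto
next
  fix U assume "openin ?T U"
  moreover have "openin (topology_generated_by \<S>) (\<Union>\<S>)"
    by (metis openin_topspace topology_generated_by_topspace)
  ultimately show "openin (topology_generated_by \<S>) U"
    using minimal_topology_subbase[of "\<lambda>x. x \<in> \<S>"] topology_generated_by_Basis by blast
qed

lemma Hausdorff_space_if_clopen_separating:
  fixes X :: "'b::order topology"
  assumes sep: "\<And>x y. x \<in> topspace X \<Longrightarrow> y \<in> topspace X \<Longrightarrow> \<not> x \<le> y \<Longrightarrow>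
      \<exists>U. clopen X U \<and> x \<in> U \<and> y \<notin> U"
  shows "Hausdorff_space X"
proof -
  have open_sep: "\<exists>U V. openin X U \<and> openin X V \<and> x \<in> U \<and> y \<in> V \<and> disjnt U V"
    if xy: "x \<in> topspace X" "y \<in> topspace X" "\<not> x \<le> y" for x y
  proof -
    obtain U where "clopen X U" "x \<in> U" "y \<notin> U"
      using sep[OF xy] by blast
    then show ?thesis
      using xy(2) unfolding clopen_def
      by (intro exI[of _ U] exI[of _ "topspace X - U"]) (auto simp: disjnt_def)
  qed
  show ?thesis
    unfolding Hausdorff_space_def
  proof (intro allI impI)
    fix x y assume xy: "x \<in> topspace X \<and> y \<in> topspace X \<and> x \<noteq> y"
    then consider "\<not> x \<le> y" | "\<not> y \<le> x"
      using antisym by blast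
    then show "\<exists>U V. openin X U \<and> openin X V \<and> x \<in> U \<and> y \<in> V \<and> disjnt U V"
    proof cases
      case 1
      then show ?thesis using open_sep xy by blast
    next
      case 2
      then show ?thesis using open_sep[of y x] xy disjnt_sym by blast
    qed
  qed
qed

lemma dim_le_0_iff_clopen_nbhds:
  "X dim_le 0 \<longleftrightarrow> (\<forall>W x. openin X W \<and> x \<in> W \<longrightarrow> (\<exists>U. clopen X U \<and> x \<in> U \<and> U \<subseteq> W))"
proof -
  have "neighbourhood_base_of (\<lambda>U. closedin X U \<and> openin X U) X \<longleftrightarrow>
      (\<forall>W x. openin X W \<and> x \<in> W \<longrightarrow> (\<exists>U. (closedin X U \<and> openin X U) \<and> x \<in> U \<and> U \<subseteq> W))"
    by (rule open_neighbourhood_base_of) simp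
  then show ?thesis
    unfolding dimension_le_0_neighbourhood_base_of_clopen clopen_def by (simp add: conj_commute)
qed

section \<open>The Priestley space of a frame\<close>

lemma phi_subset_iff:
  assumes "frame TYPE('a::complete_lattice)"
  shows "phi (a::'a) \<subseteq> phi b \<longleftrightarrow> a \<le> b"
proof
  assume "phi a \<subseteq> phi b"
  then show "a \<le> b"
    using prime_filter_separates[OF assms, of a b] unfolding phi_def by blast
qed (auto simp: phi_def intro: prime_filter_up)

lemma phi_subset_XL_points: "phi (a::'a::complete_lattice) \<subseteq> XL_points TYPE('a)"
  by (auto simp: phi_def XL_points_def)

lemma phi_top: "phi (top::'a::complete_lattice) = XL_points TYPE('a)"
  by (auto simp: phi_def XL_points_def prime_filter_top)

lemma phi_bot: "phi bot = {}"
  by (auto simp: phi_def prime_filter_bot)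

lemma phi_inf: "phi (inf a b) = phi a \<inter> phi b"
  by (auto simp: phi_def prime_filter_inf_iff)

lemma phi_sup: "phi (sup a b) = phi a \<union> phi b"
  by (auto simp: phi_def prime_filter_sup_iff)

lemma phi_mono: "a \<le> b \<Longrightarrow> phi a \<subseteq> phi b"
  by (auto simp: phi_def intro: prime_filter_up)

lemma phi_Sup_finite: "finite A \<Longrightarrow> phi (Sup A) = \<Union>(phi ` A)"
  by (auto simp: phi_def prime_filter_Sup_finite_iff)

lemma topspace_XL [simp]: "topspace (XL TYPE('a::complete_lattice)) = XL_points TYPE('a)"
  unfolding XL_def topology_generated_by_topspace using phi_subset_XL_points phi_top by blast

lemma openin_XL_phi: "openin (XL TYPE('a::complete_lattice)) (phi (a::'a))"
  unfolding XL_def by (rule topology_generated_by_Basis) blast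

lemma closedin_XL_phi: "closedin (XL TYPE('a::complete_lattice)) (phi (a::'a))"
proof -
  have "openin (XL TYPE('a)) (XL_points TYPE('a) - phi a)"
    unfolding XL_def by (rule topology_generated_by_Basis) blast
  then show ?thesis
    unfolding closedin_def using phi_subset_XL_points by simp
qed

lemma clopen_XL_phi: "clopen (XL TYPE('a::complete_lattice)) (phi (a::'a))"
  by (simp add: clopen_def openin_XL_phi closedin_XL_phi)

lemma clopen_XL_compl_phi:
  "clopen (XL TYPE('a::complete_lattice)) (XL_points TYPE('a) - phi (a::'a))"
  using clopen_XL_phi[of a] phi_subset_XL_points[of a]
  unfolding clopen_def closedin_def by (simp add: double_diff)

lemma clopen_XL_diff_phi: "clopen (XL TYPE('a::complete_lattice)) (phi (a::'a) - phi b)"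
proof -
  have "phi a - phi b = phi a \<inter> (XL_points TYPE('a) - phi b)"
    using phi_subset_XL_points by blast
  then show ?thesis
    using clopen_XL_phi[of a] clopen_XL_compl_phi[of b]
    unfolding clopen_def by (simp add: openin_Int closedin_Int)
qed

lemma openin_XL_iff:
  "openin (XL TYPE('a::complete_lattice)) U \<longleftrightarrow>
     (\<forall>x\<in>U. \<exists>a b::'a. x \<in> phi a - phi b \<and> phi a - phi b \<subseteq> U)"
proof
  assume "openin (XL TYPE('a)) U"
  then have "generate_topology_on (range phi \<union> range (\<lambda>a::'a. XL_points TYPE('a) - phi a)) U"
    unfolding XL_def by (rule openin_topology_generated_by)
  then show "\<forall>x\<in>U. \<exists>a b::'a. x \<in> phi a - phi b \<and> phi a - phi b \<subseteq> U"
  proof induction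
    case (Int u v)
    show ?case
    proof
      fix x assume "x \<in> u \<inter> v"
      then obtain a1 b1 a2 b2 :: 'a where "x \<in> phi a1 - phi b1" "phi a1 - phi b1 \<subseteq> u"
        "x \<in> phi a2 - phi b2" "phi a2 - phi b2 \<subseteq> v"
        using Int.IH by blast
      then show "\<exists>a b::'a. x \<in> phi a - phi b \<and> phi a - phi b \<subseteq> u \<inter> v"
        by (intro exI[of _ "inf a1 a2"] exI[of _ "sup b1 b2"]) (auto simp: phi_inf phi_sup)
    qed
  next
    case (Basis s)
    then obtain a::'a where "s = phi a \<or> s = XL_points TYPE('a) - phi a"
      by blast
    then show ?case
    proof
      assume s: "s = phi a"
      show ?thesis
        unfolding s by (intro ballI, rule exI[of _ a], rule exI[of _ bot]) (simp add: phi_bot)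
    next
      assume s: "s = XL_points TYPE('a) - phi a"
      show ?thesis
        unfolding s by (intro ballI, rule exI[of _ top], rule exI[of _ a]) (simp add: phi_top)
    qed
  qed blast+
next
  assume "\<forall>x\<in>U. \<exists>a b::'a. x \<in> phi a - phi b \<and> phi a - phi b \<subseteq> U"
  then have "U = \<Union>{V. \<exists>a b::'a. V = phi a - phi b \<and> V \<subseteq> U}"
    by blast
  moreover have "openin (XL TYPE('a)) (\<Union>{V. \<exists>a b::'a. V = phi a - phi b \<and> V \<subseteq> U})"
    using clopen_XL_diff_phi unfolding clopen_def by (intro openin_Union) blast
  ultimately show "openin (XL TYPE('a)) U"
    by simp
qed

lemma subbasic_cover_XL_imp_Inf_le_Sup:
  assumes fr: "frame TYPE('a::complete_lattice)"
    and cover: "XL_points TYPE('a) \<subseteq> \<Union>(phi ` A) \<union> \<Union>((\<lambda>b. XL_points TYPE('a) - phi b) ` B)"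
  shows "\<exists>A0 B0. finite A0 \<and> A0 \<subseteq> A \<and> finite B0 \<and> B0 \<subseteq> (B::'a set) \<and> Inf B0 \<le> Sup A0"
proof (rule ccontr)
  assume "\<not> ?thesis"
  then obtain p where "prime_filter p" "B \<subseteq> p" "p \<inter> A = {}"
    using prime_filter_separation[OF fr, of B A] by blast
  moreover have "p \<in> XL_points TYPE('a)"
    using \<open>prime_filter p\<close> by (simp add: XL_points_def)
  ultimately show False
    using cover unfolding phi_def by blast
qed

lemma XL_points_cover_if_Inf_le_Sup:
  assumes "finite A0" and "finite B0" and "Inf B0 \<le> Sup A0"
  shows "XL_points TYPE('a::complete_lattice) \<subseteq>
    \<Union>(phi ` A0) \<union> \<Union>((\<lambda>b. XL_points TYPE('a) - phi b) ` (B0::'a set))"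
proof
  fix p assume "p \<in> XL_points TYPE('a)"
  then have p: "prime_filter p" by (simp add: XL_points_def)
  show "p \<in> \<Union>(phi ` A0) \<union> \<Union>((\<lambda>b. XL_points TYPE('a) - phi b) ` B0)"
  proof (cases "B0 \<subseteq> p")
    case True
    then have "Sup A0 \<in> p"
      using prime_filter_Inf_finite[OF p assms(2)] prime_filter_up[OF p] assms(3) by blast
    then show ?thesis
      using p assms(1) by (auto simp: prime_filter_Sup_finite_iff phi_def)
  next
    case False
    then show ?thesis
      using p by (auto simp: phi_def XL_points_def)
  qed
qed

lemma compact_space_XL:
  assumes fr: "frame TYPE('a::complete_lattice)"
  shows "compact_space (XL TYPE('a))"
proof -
  define \<B> where "\<B> = range phi \<union> range (\<lambda>a::'a. XL_points TYPE('a) - phi a)"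
  have Union_\<B>: "\<Union>\<B> = XL_points TYPE('a)"
    unfolding \<B>_def using phi_subset_XL_points phi_top by blast
  have "\<exists>\<C>'. finite \<C>' \<and> \<C>' \<subseteq> \<C> \<and> XL_points TYPE('a) \<subseteq> \<Union>\<C>'"
    if \<C>: "\<C> \<subseteq> \<B>" "XL_points TYPE('a) \<subseteq> \<Union>\<C>" for \<C>
  proof -
    define A where "A = {a::'a. phi a \<in> \<C>}"
    define B where "B = {b::'a. XL_points TYPE('a) - phi b \<in> \<C>}"
    have "\<C> = phi ` A \<union> (\<lambda>b. XL_points TYPE('a) - phi b) ` B"
      using \<C>(1) unfolding A_def B_def \<B>_def by blast
    then obtain A0 B0 where AB: "finite A0" "A0 \<subseteq> A" "finite B0" "B0 \<subseteq> B" "Inf B0 \<le> Sup A0"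
      using subbasic_cover_XL_imp_Inf_le_Sup[OF fr, of A B] \<C>(2) by auto
    then show ?thesis
      using XL_points_cover_if_Inf_le_Sup[OF AB(1,3,5)] unfolding A_def B_def
      by (intro exI[of _ "phi ` A0 \<union> (\<lambda>b. XL_points TYPE('a) - phi b) ` B0"]) auto
  qed
  moreover have "topology (arbitrary union_of (finite intersection_of (\<lambda>x. x \<in> \<B>)
      relative_to XL_points TYPE('a))) = XL TYPE('a)"
    unfolding XL_def topology_generated_by_eq_subbase \<B>_def[symmetric] Union_\<B> ..
  ultimately show ?thesis
    using Union_\<B> by (intro Alexander_subbase_alt[of "XL_points TYPE('a)" \<B>]) auto
qed

lemma Hausdorff_space_XL: "Hausdorff_space (XL TYPE('a::complete_lattice))"
proof (rule Hausdorff_space_if_clopen_separating)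
  fix x y :: "'a set" assume "x \<in> topspace (XL TYPE('a))" "\<not> x \<subseteq> y"
  then obtain a where "x \<in> phi a" "y \<notin> phi a"
    by (auto simp: phi_def XL_points_def)
  then show "\<exists>U. clopen (XL TYPE('a)) U \<and> x \<in> U \<and> y \<notin> U"
    using clopen_XL_phi by blast
qed

lemma XL_dim_le_0: "XL TYPE('a::complete_lattice) dim_le 0"
  unfolding dim_le_0_iff_clopen_nbhds openin_XL_iff using clopen_XL_diff_phi by blast

lemma upset_XL_phi: "upset (XL TYPE('a::complete_lattice)) (\<subseteq>) (phi (a::'a))"
  unfolding upset_def using phi_subset_XL_points[of a] by (auto simp: phi_def XL_points_def)

lemma priestley_space_XL:
  assumes "frame TYPE('a::complete_lattice)"
  shows "priestley_space (XL TYPE('a)) (\<subseteq>)"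
  unfolding priestley_space_def stone_space_def partial_order_on_space_def ClopUp_def
  using compact_space_XL[OF assms] Hausdorff_space_XL XL_dim_le_0 clopen_XL_phi upset_XL_phi
  by (auto simp: phi_def XL_points_def)

lemma open_upset_XL_phi_nbhd:
  assumes fr: "frame TYPE('a::complete_lattice)"
    and W: "openin (XL TYPE('a)) W" "upset (XL TYPE('a)) (\<subseteq>) W" and "x \<in> W"
  shows "\<exists>c::'a. x \<in> phi c \<and> phi c \<subseteq> W"
proof -
  define C where "C = XL_points TYPE('a) - W"
  have x: "prime_filter x"
    using \<open>x \<in> W\<close> openin_subset[OF W(1)] by (auto simp: XL_points_def)
  have "closedin (XL TYPE('a)) C"
    unfolding C_def using W(1) by (metis closedin_diff closedin_topspace topspace_XL)
  then have "compactin (XL TYPE('a)) C"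
    by (rule closedin_compact_space[OF compact_space_XL[OF fr]])
  moreover have "C \<subseteq> \<Union>((\<lambda>a. XL_points TYPE('a) - phi a) ` x)"
  proof
    fix y assume y: "y \<in> C"
    then have "\<not> x \<subseteq> y"
      using W(2) \<open>x \<in> W\<close> unfolding C_def upset_def by auto
    then show "y \<in> \<Union>((\<lambda>a. XL_points TYPE('a) - phi a) ` x)"
      using y unfolding C_def phi_def by auto
  qed
  moreover have "openin (XL TYPE('a)) (XL_points TYPE('a) - phi a)" for a
    using closedin_XL_phi[of a] unfolding closedin_def by simp
  ultimately have "\<exists>A0\<subseteq>x. finite A0 \<and> C \<subseteq> \<Union>((\<lambda>a. XL_points TYPE('a) - phi a) ` A0)"
    by (rule compactin_indexed_cover)
  then obtain A0 where A0: "A0 \<subseteq> x" "finite A0" "C \<subseteq> \<Union>((\<lambda>a. XL_points TYPE('a) - phi a) ` A0)"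
    by blast
  have "x \<in> phi (Inf A0)"
    using prime_filter_Inf_finite[OF x A0(2,1)] x by (simp add: phi_def)
  moreover have "phi (Inf A0) \<subseteq> W"
  proof
    fix y assume "y \<in> phi (Inf A0)"
    then have "y \<in> phi a" if "a \<in> A0" for a
      using that phi_mono[OF Inf_lower] by blast
    then show "y \<in> W"
      using A0(3) \<open>y \<in> phi (Inf A0)\<close> phi_subset_XL_points unfolding C_def by blast
  qed
  ultimately show ?thesis
    by blast
qed

lemma open_upset_XL_eq_Union_phi:
  assumes "frame TYPE('a::complete_lattice)"
    and "openin (XL TYPE('a)) W" and "upset (XL TYPE('a)) (\<subseteq>) W"
  shows "W = \<Union>(phi ` {c::'a. phi c \<subseteq> W})"
  using open_upset_XL_phi_nbhd[OF assms] by blast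

lemma ClopUp_XL:
  assumes fr: "frame TYPE('a::complete_lattice)"
  shows "ClopUp (XL TYPE('a)) (\<subseteq>) = range (phi :: 'a \<Rightarrow> _)"
proof (intro antisym subsetI)
  fix U assume "U \<in> ClopUp (XL TYPE('a)) (\<subseteq>)"
  then have U: "openin (XL TYPE('a)) U" "closedin (XL TYPE('a)) U" "upset (XL TYPE('a)) (\<subseteq>) U"
    unfolding ClopUp_def clopen_def by auto
  have "compactin (XL TYPE('a)) U"
    by (rule closedin_compact_space[OF compact_space_XL[OF fr] U(2)])
  moreover have "U \<subseteq> \<Union>(phi ` {c::'a. phi c \<subseteq> U})"
    using open_upset_XL_eq_Union_phi[OF fr U(1,3)] by blast
  ultimately have "\<exists>A0\<subseteq>{c::'a. phi c \<subseteq> U}. finite A0 \<and> U \<subseteq> \<Union>(phi ` A0)"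
    using openin_XL_phi by (rule compactin_indexed_cover)
  then obtain A0 where "A0 \<subseteq> {c::'a. phi c \<subseteq> U}" "finite A0" "U \<subseteq> \<Union>(phi ` A0)"
    by blast
  then have "U = phi (Sup A0)"
    by (auto simp: phi_Sup_finite)
  then show "U \<in> range phi"
    by blast
qed (auto simp: ClopUp_def clopen_XL_phi upset_XL_phi)

lemma closure_of_XL_Union_phi:
  assumes fr: "frame TYPE('a::complete_lattice)"
  shows "XL TYPE('a) closure_of \<Union>(phi ` A) = phi (Sup (A::'a set))"
proof
  have "\<Union>(phi ` A) \<subseteq> phi (Sup A)"
    using phi_mono[OF Sup_upper] by blast
  then show "XL TYPE('a) closure_of \<Union>(phi ` A) \<subseteq> phi (Sup A)"
    using closedin_XL_phi by (rule closure_of_minimal)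
next
  show "phi (Sup A) \<subseteq> XL TYPE('a) closure_of \<Union>(phi ` A)"
  proof
    fix x assume x: "x \<in> phi (Sup A)"
    have "T \<inter> \<Union>(phi ` A) \<noteq> {}" if T: "openin (XL TYPE('a)) T" "x \<in> T" for T
    proof
      assume disj: "T \<inter> \<Union>(phi ` A) = {}"
      obtain c d :: 'a where cd: "x \<in> phi c - phi d" "phi c - phi d \<subseteq> T"
        using T unfolding openin_XL_iff by blast
      have "phi (inf c a) \<subseteq> phi d" if "a \<in> A" for a
        unfolding phi_inf using cd(2) disj that by blast
      then have "inf c (Sup A) \<le> d"
        unfolding frame_inf_Sup[OF fr] phi_subset_iff[OF fr] by (rule SUP_least)
      moreover have "x \<in> phi (inf c (Sup A))"
        unfolding phi_inf using x cd(1) by blast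
      ultimately have "x \<in> phi d"
        using phi_mono by blast
      then show False
        using cd(1) by blast
    qed
    moreover have "x \<in> topspace (XL TYPE('a))"
      using x phi_subset_XL_points by auto
    ultimately show "x \<in> XL TYPE('a) closure_of \<Union>(phi ` A)"
      unfolding in_closure_of by blast
  qed
qed

lemma closure_of_open_upset_XL:
  assumes "frame TYPE('a::complete_lattice)"
    and "openin (XL TYPE('a)) W" and "upset (XL TYPE('a)) (\<subseteq>) W"
  shows "XL TYPE('a) closure_of W = phi (Sup {c::'a. phi c \<subseteq> W})"
proof -
  have "XL TYPE('a) closure_of W = XL TYPE('a) closure_of \<Union>(phi ` {c::'a. phi c \<subseteq> W})"
    using open_upset_XL_eq_Union_phi[OF assms] by (rule arg_cong)
  also have "\<dots> = phi (Sup {c::'a. phi c \<subseteq> W})"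
    by (rule closure_of_XL_Union_phi[OF assms(1)])
  finally show ?thesis .
qed

lemma prime_filter_extension_if_himp_notin:
  assumes fr: "frame TYPE('a::complete_lattice)" and y: "prime_filter y" "himp (a::'a) b \<notin> y"
  shows "\<exists>p. prime_filter p \<and> y \<subseteq> p \<and> a \<in> p \<and> b \<notin> p"
proof -
  have "\<not> Inf B0 \<le> Sup A0"
    if B0: "finite B0" "B0 \<subseteq> insert a y" and A0: "finite A0" "A0 \<subseteq> {b}" for B0 A0
  proof
    assume "Inf B0 \<le> Sup A0"
    have "inf (Inf (B0 - {a})) a \<le> Inf B0"
    proof (rule Inf_greatest)
      fix z assume "z \<in> B0"
      then show "inf (Inf (B0 - {a})) a \<le> z"
        by (cases "z = a") (simp_all add: Inf_lower le_infI1)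
    qed
    also have "\<dots> \<le> Sup A0" by fact
    also have "\<dots> \<le> b"
      using A0(2) by (auto intro: Sup_least)
    finally have "Inf (B0 - {a}) \<le> himp a b"
      using le_himp_iff[OF fr] by blast
    moreover have "Inf (B0 - {a}) \<in> y"
      using prime_filter_Inf_finite[OF y(1)] B0 by blast
    ultimately show False
      using y prime_filter_up by blast
  qed
  from prime_filter_separation[OF fr this]
  obtain p where "prime_filter p" "insert a y \<subseteq> p" "p \<inter> {b} = {}"
    by blast
  then show ?thesis
    by auto
qed

lemma down_XL_diff_phi:
  assumes fr: "frame TYPE('a::complete_lattice)"
  shows "down (XL TYPE('a)) (\<subseteq>) (phi a - phi b) = XL_points TYPE('a) - phi (himp (a::'a) b)"
proof (intro antisym subsetI)
  fix y assume "y \<in> down (XL TYPE('a)) (\<subseteq>) (phi a - phi b)"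
  then obtain x where y: "prime_filter y" "y \<subseteq> x" and x: "prime_filter x" "a \<in> x" "b \<notin> x"
    unfolding down_def by (auto simp: XL_points_def phi_def)
  have "himp a b \<notin> y"
  proof
    assume "himp a b \<in> y"
    then have "inf (himp a b) a \<in> x"
      using y(2) x(1,2) prime_filter_inf_iff by blast
    moreover have "inf (himp a b) a \<le> b"
      using le_himp_iff[OF fr] by blast
    ultimately show False
      using x(1,3) prime_filter_up by blast
  qed
  then show "y \<in> XL_points TYPE('a) - phi (himp a b)"
    using y(1) by (simp add: phi_def XL_points_def)
next
  fix y assume "y \<in> XL_points TYPE('a) - phi (himp a b)"
  then have y: "prime_filter y" "himp a b \<notin> y"
    by (auto simp: phi_def XL_points_def)
  then obtain p where "prime_filter p" "y \<subseteq> p" "a \<in> p" "b \<notin> p"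
    using prime_filter_extension_if_himp_notin[OF fr] by blast
  then have "p \<in> phi a - phi b"
    by (simp add: phi_def)
  then show "y \<in> down (XL TYPE('a)) (\<subseteq>) (phi a - phi b)"
    unfolding down_def topspace_XL XL_points_def using y(1) \<open>y \<subseteq> p\<close> by blast
qed

lemma clopen_down_XL:
  assumes fr: "frame TYPE('a::complete_lattice)" and K: "clopen (XL TYPE('a)) K"
  shows "clopen (XL TYPE('a)) (down (XL TYPE('a)) (\<subseteq>) K)"
proof -
  define f where "f p = phi (fst p) - phi (snd p)" for p :: "'a \<times> 'a"
  define P where "P = {p. f p \<subseteq> K}"
  have "compactin (XL TYPE('a)) K"
    using K compact_space_XL[OF fr] closedin_compact_space unfolding clopen_def by blast
  moreover have "K \<subseteq> \<Union>(f ` P)"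
  proof
    fix x assume "x \<in> K"
    then obtain a b where "x \<in> phi a - phi b" "phi a - phi b \<subseteq> K"
      using K unfolding clopen_def openin_XL_iff by blast
    then show "x \<in> \<Union>(f ` P)"
      unfolding P_def by (intro UN_I[of "(a, b)"]) (simp_all add: f_def)
  qed
  moreover have "openin (XL TYPE('a)) (f p)" for p
    using clopen_XL_diff_phi unfolding clopen_def f_def by blast
  ultimately have "\<exists>P0\<subseteq>P. finite P0 \<and> K \<subseteq> \<Union>(f ` P0)"
    by (rule compactin_indexed_cover)
  then obtain P0 where P0: "P0 \<subseteq> P" "finite P0" "K \<subseteq> \<Union>(f ` P0)"
    by blast
  then have "K = \<Union>(f ` P0)"
    unfolding P_def by blast
  define g where "g p = XL_points TYPE('a) - phi (himp (fst p) (snd p))" for p :: "'a \<times> 'a"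
  have "down (XL TYPE('a)) (\<subseteq>) K = (\<Union>p\<in>P0. down (XL TYPE('a)) (\<subseteq>) (f p))"
    unfolding \<open>K = \<Union>(f ` P0)\<close> down_def by blast
  also have "\<dots> = \<Union>(g ` P0)"
    by (simp add: f_def g_def down_XL_diff_phi[OF fr])
  finally have "down (XL TYPE('a)) (\<subseteq>) K = \<Union>(g ` P0)" .
  moreover have "clopen (XL TYPE('a)) (g p)" for p
    unfolding g_def by (rule clopen_XL_compl_phi)
  ultimately show ?thesis
    using P0(2) unfolding clopen_def by (auto intro!: openin_Union closedin_Union)
qed

lemma L_space_XL:
  assumes fr: "frame TYPE('a::complete_lattice)"
  shows "L_space (XL TYPE('a)) (\<subseteq>)"
  unfolding L_space_def
  using priestley_space_XL[OF fr] clopen_down_XL[OF fr] closure_of_open_upset_XL[OF fr] openin_XL_phi[where 'a='a]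
  by simp

lemma phi_subset_Union_phi_iff:
  assumes fr: "frame TYPE('a::complete_lattice)"
  shows "phi (a::'a) \<subseteq> \<Union>(phi ` S) \<longleftrightarrow> (\<exists>T\<subseteq>S. finite T \<and> a \<le> Sup T)"
proof
  assume "phi a \<subseteq> \<Union>(phi ` S)"
  moreover have "compactin (XL TYPE('a)) (phi a)"
    by (rule closedin_compact_space[OF compact_space_XL[OF fr] closedin_XL_phi])
  ultimately have "\<exists>T\<subseteq>S. finite T \<and> phi a \<subseteq> \<Union>(phi ` T)"
    using openin_XL_phi by (intro compactin_indexed_cover)
  then show "\<exists>T\<subseteq>S. finite T \<and> a \<le> Sup T"
    using phi_Sup_finite phi_subset_iff[OF fr] by metis
next
  assume "\<exists>T\<subseteq>S. finite T \<and> a \<le> Sup T"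
  then obtain T where "T \<subseteq> S" "finite T" "a \<le> Sup T"
    by blast
  then have "phi a \<subseteq> \<Union>(phi ` T)"
    using phi_mono phi_Sup_finite by metis
  then show "phi a \<subseteq> \<Union>(phi ` S)"
    using \<open>T \<subseteq> S\<close> by blast
qed

lemma way_below_sp_XL_phi_iff:
  assumes fr: "frame TYPE('a::complete_lattice)"
  shows "way_below_sp (XL TYPE('a)) (\<subseteq>) (phi a) (phi b) \<longleftrightarrow> way_below (a::'a) b"
proof
  assume wb: "way_below_sp (XL TYPE('a)) (\<subseteq>) (phi a) (phi b)"
  show "way_below a b"
    unfolding way_below_def
  proof (intro allI impI)
    fix S assume "b \<le> Sup S"
    have "openin (XL TYPE('a)) (\<Union>(phi ` S))"
      using openin_XL_phi by blast
    moreover have "upset (XL TYPE('a)) (\<subseteq>) (\<Union>(phi ` S))"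
      using upset_XL_phi[where 'a='a] unfolding upset_def by blast
    moreover have "phi b \<subseteq> XL TYPE('a) closure_of \<Union>(phi ` S)"
      unfolding closure_of_XL_Union_phi[OF fr] using \<open>b \<le> Sup S\<close> by (rule phi_mono)
    ultimately have "phi a \<subseteq> \<Union>(phi ` S)"
      using wb unfolding way_below_sp_def by blast
    then show "\<exists>T. finite T \<and> T \<subseteq> S \<and> a \<le> Sup T"
      unfolding phi_subset_Union_phi_iff[OF fr] by blast
  qed
next
  assume wb: "way_below a b"
  show "way_below_sp (XL TYPE('a)) (\<subseteq>) (phi a) (phi b)"
    unfolding way_below_sp_def
  proof (intro allI impI)
    fix W assume W: "openin (XL TYPE('a)) W \<and> upset (XL TYPE('a)) (\<subseteq>) W \<and> phi b \<subseteq> XL TYPE('a) closure_of W"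
    then have "phi b \<subseteq> phi (Sup {c. phi c \<subseteq> W})"
      using closure_of_open_upset_XL[OF fr, of W] by simp
    then obtain T where "T \<subseteq> {c. phi c \<subseteq> W}" "finite T" "a \<le> Sup T"
      using wb unfolding phi_subset_iff[OF fr] way_below_def by blast
    then have "phi a \<subseteq> \<Union>(phi ` {c. phi c \<subseteq> W})"
      unfolding phi_subset_Union_phi_iff[OF fr] by blast
    then show "phi a \<subseteq> W"
      by blast
  qed
qed

lemma L_compact_XL_iff:
  assumes fr: "frame TYPE('a::complete_lattice)"
  shows "L_compact (XL TYPE('a)) (\<subseteq>) \<longleftrightarrow> compact_frame TYPE('a)"
proof -
  let ?C = "{c::'a. way_below c top}"
  have "{V \<in> range phi. way_below_sp (XL TYPE('a)) (\<subseteq>) V (phi top)} = phi ` ?C"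
    using way_below_sp_XL_phi_iff[OF fr] by blast
  then have "L_compact (XL TYPE('a)) (\<subseteq>) \<longleftrightarrow> phi top = \<Union>(phi ` ?C)"
    unfolding L_compact_def topspace_XL phi_top[symmetric] ker_def ClopUp_XL[OF fr] by simp
  moreover have "\<Union>(phi ` ?C) \<subseteq> phi top"
    unfolding phi_top using phi_subset_XL_points by blast
  moreover have "phi top \<subseteq> \<Union>(phi ` ?C) \<longleftrightarrow> (\<exists>T\<subseteq>?C. finite T \<and> top \<le> Sup T)"
    by (rule phi_subset_Union_phi_iff[OF fr])
  moreover have "(\<exists>T\<subseteq>?C. finite T \<and> top \<le> Sup T) \<longleftrightarrow> way_below (top::'a) top"
  proof
    assume "\<exists>T\<subseteq>?C. finite T \<and> top \<le> Sup T"
    then obtain T where T: "T \<subseteq> ?C" "finite T" "top \<le> Sup T"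
      by blast
    have "way_below (Sup T) (top::'a)"
      using T(1) by (intro way_below_Sup_finite[OF T(2)]) blast
    with T(3) show "way_below (top::'a) top"
      by (rule way_below_mono)
  next
    assume "way_below (top::'a) top"
    then show "\<exists>T\<subseteq>?C. finite T \<and> top \<le> Sup T"
      by (intro exI[of _ "{top::'a}"]) simp
  qed
  ultimately show ?thesis
    unfolding compact_frame_def by blast
qed

lemma ClopBi_XL:
  assumes fr: "frame TYPE('a::complete_lattice)"
  shows "ClopBi (XL TYPE('a)) (\<subseteq>) = phi ` {c::'a. complemented c}"
proof (intro antisym subsetI)
  fix V assume V: "V \<in> ClopBi (XL TYPE('a)) (\<subseteq>)"
  then have "V \<in> ClopUp (XL TYPE('a)) (\<subseteq>)"
    unfolding ClopBi_def ClopUp_def by blast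
  then obtain c :: 'a where c: "V = phi c"
    by (auto simp: ClopUp_XL[OF fr])
  have "downset (XL TYPE('a)) (\<subseteq>) (phi c)"
    using V unfolding c ClopBi_def by blast
  then have "upset (XL TYPE('a)) (\<subseteq>) (XL_points TYPE('a) - phi c)"
    unfolding downset_def upset_def by auto
  then have "XL_points TYPE('a) - phi c \<in> ClopUp (XL TYPE('a)) (\<subseteq>)"
    using clopen_XL_compl_phi unfolding ClopUp_def by blast
  then obtain d :: 'a where d: "XL_points TYPE('a) - phi c = phi d"
    by (auto simp: ClopUp_XL[OF fr])
  have "phi (inf c d) \<subseteq> phi bot"
    unfolding phi_inf phi_bot using d by blast
  then have "inf c d = bot"
    by (simp add: phi_subset_iff[OF fr] bot_unique)
  moreover have "phi top \<subseteq> phi (sup c d)"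
    unfolding phi_sup phi_top using d by blast
  then have "top \<le> sup c d"
    by (simp add: phi_subset_iff[OF fr])
  ultimately show "V \<in> phi ` {c. complemented c}"
    unfolding c by (blast intro: complementedI)
next
  fix V assume "V \<in> phi ` {c::'a. complemented c}"
  then obtain c where c: "complemented c" "V = phi c"
    by blast
  have "y \<in> phi c" if "x \<in> phi c" "prime_filter y" "y \<subseteq> x" for x y
    using that prime_filter_pseudocompl_iff[OF fr c(1)] unfolding phi_def by blast
  then have "downset (XL TYPE('a)) (\<subseteq>) (phi c)"
    unfolding downset_def using phi_subset_XL_points by (auto simp: XL_points_def)
  then show "V \<in> ClopBi (XL TYPE('a)) (\<subseteq>)"
    unfolding ClopBi_def c(2) using clopen_XL_phi upset_XL_phi by blast
qed

lemma cen_XL_phi: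
  assumes fr: "frame TYPE('a::complete_lattice)"
  shows "cen (XL TYPE('a)) (\<subseteq>) (phi a) = \<Union>(phi ` {c::'a. complemented c \<and> c \<le> a})"
  unfolding cen_def ClopBi_XL[OF fr] using phi_subset_iff[OF fr] by blast

lemma stone_L_space_XL_iff:
  assumes fr: "frame TYPE('a::complete_lattice)"
  shows "stone_L_space (XL TYPE('a)) (\<subseteq>) \<longleftrightarrow> stone_frame TYPE('a)"
proof -
  have cen_subset: "cen (XL TYPE('a)) (\<subseteq>) U \<subseteq> U" for U
    unfolding cen_def by blast
  have "(\<forall>U\<in>ClopUp (XL TYPE('a)) (\<subseteq>).
          cen (XL TYPE('a)) (\<subseteq>) U \<subseteq> U \<and> U \<subseteq> XL TYPE('a) closure_of (cen (XL TYPE('a)) (\<subseteq>) U))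
        \<longleftrightarrow> zero_dim_frame TYPE('a)"
    unfolding zero_dim_frame_iff ClopUp_XL[OF fr]
    by (simp add: cen_subset cen_XL_phi[OF fr] closure_of_XL_Union_phi[OF fr] phi_subset_iff[OF fr])
  then show ?thesis
    unfolding stone_L_space_def stone_frame_def L_compact_XL_iff[OF fr] using L_space_XL[OF fr] by blast
qed

section \<open>The spatial part\<close>

lemma down_singleton_XL:
  assumes y: "prime_filter (y::'a::complete_lattice set)" and "Sup (- y) \<notin> y"
  shows "down (XL TYPE('a)) (\<subseteq>) {y} = XL_points TYPE('a) - phi (Sup (- y))"
proof (intro antisym subsetI)
  fix z assume "z \<in> down (XL TYPE('a)) (\<subseteq>) {y}"
  then show "z \<in> XL_points TYPE('a) - phi (Sup (- y))"
    using assms(2) unfolding down_def phi_def by auto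
next
  fix z assume "z \<in> XL_points TYPE('a) - phi (Sup (- y))"
  then have z: "prime_filter z" "Sup (- y) \<notin> z"
    by (auto simp: phi_def XL_points_def)
  have "z \<subseteq> y"
  proof
    fix w assume "w \<in> z"
    then show "w \<in> y"
      using z prime_filter_up[OF z(1)] Sup_upper[of w "- y"] by blast
  qed
  then show "z \<in> down (XL TYPE('a)) (\<subseteq>) {y}"
    using z(1) unfolding down_def by (simp add: XL_points_def)
qed

lemma Sup_compl_notin_if_clopen_down_singleton:
  assumes fr: "frame TYPE('a::complete_lattice)" and y: "prime_filter (y::'a set)"
    and D: "clopen (XL TYPE('a)) (down (XL TYPE('a)) (\<subseteq>) {y})"
  shows "Sup (- y) \<notin> y"
proof -
  define D where "D = down (XL TYPE('a)) (\<subseteq>) {y}"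
  have D_iff: "z \<in> D \<longleftrightarrow> prime_filter z \<and> z \<subseteq> y" for z
    unfolding D_def down_def by (simp add: XL_points_def)
  have "clopen (XL TYPE('a)) (XL_points TYPE('a) - D)"
    using D unfolding D_def clopen_def closedin_def
    by (simp add: double_diff openin_subset)
  moreover have "upset (XL TYPE('a)) (\<subseteq>) (XL_points TYPE('a) - D)"
    unfolding upset_def by (auto simp: XL_points_def D_iff)
  ultimately have "XL_points TYPE('a) - D \<in> ClopUp (XL TYPE('a)) (\<subseteq>)"
    unfolding ClopUp_def by blast
  then obtain m :: 'a where m: "XL_points TYPE('a) - D = phi m"
    by (auto simp: ClopUp_XL[OF fr])
  have "m \<notin> y"
    using m y D_iff[of y] by (auto simp: phi_def XL_points_def)
  moreover have "s \<le> m" if "s \<notin> y" for s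
  proof -
    have "phi s \<subseteq> phi m"
      using that m D_iff phi_subset_XL_points[of s] by (auto simp: phi_def)
    then show ?thesis
      by (simp add: phi_subset_iff[OF fr])
  qed
  then have "Sup (- y) \<le> m"
    by (intro Sup_least) simp
  ultimately show "Sup (- y) \<notin> y"
    using prime_filter_up[OF y] by blast
qed

abbreviation YL :: "'a::complete_lattice itself \<Rightarrow> 'a set set" where
  "YL A \<equiv> spatial_points (XL A) (\<subseteq>)"

lemma YL_eq:
  assumes "frame TYPE('a::complete_lattice)"
  shows "YL TYPE('a) = {y::'a set. completely_prime_filter y}"
proof (intro antisym subsetI)
  fix y assume "y \<in> YL TYPE('a)"
  then show "y \<in> {y. completely_prime_filter y}"
    using Sup_compl_notin_if_clopen_down_singleton[OF assms] completely_prime_filter_iff_Sup_compl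
    unfolding spatial_points_def by (auto simp: XL_points_def)
next
  fix y assume "y \<in> {y::'a set. completely_prime_filter y}"
  then have y: "prime_filter y" "Sup (- y) \<notin> y"
    using completely_prime_filter_imp_prime completely_prime_filter_iff_Sup_compl by auto
  have "clopen (XL TYPE('a)) (down (XL TYPE('a)) (\<subseteq>) {y})"
    unfolding down_singleton_XL[OF y] by (rule clopen_XL_compl_phi)
  then show "y \<in> YL TYPE('a)"
    using y(1) unfolding spatial_points_def by (simp add: XL_points_def)
qed

lemma phi_inter_YL:
  assumes "frame TYPE('a::complete_lattice)"
  shows "phi a \<inter> YL TYPE('a) = {y. completely_prime_filter y \<and> (a::'a) \<in> y}"
  unfolding YL_eq[OF assms] phi_def using completely_prime_filter_imp_prime by blast

lemma topspace_spatial_part_XL: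
  "topspace (spatial_part (XL TYPE('a::complete_lattice)) (\<subseteq>)) = YL TYPE('a)"
proof -
  have "YL TYPE('a) = phi top \<inter> YL TYPE('a)"
    unfolding phi_top spatial_points_def by auto
  moreover have "phi (top::'a) \<in> ClopUp (XL TYPE('a)) (\<subseteq>)"
    unfolding ClopUp_def using clopen_XL_phi upset_XL_phi by blast
  ultimately show ?thesis
    unfolding spatial_part_def topology_generated_by_topspace by blast
qed

lemma openin_spatial_part_XL_iff:
  assumes fr: "frame TYPE('a::complete_lattice)"
  shows "openin (spatial_part (XL TYPE('a)) (\<subseteq>)) V \<longleftrightarrow> (\<exists>a::'a. V = phi a \<inter> YL TYPE('a))"
proof
  assume "openin (spatial_part (XL TYPE('a)) (\<subseteq>)) V"
  then have "generate_topology_on ((\<lambda>U. U \<inter> YL TYPE('a)) ` ClopUp (XL TYPE('a)) (\<subseteq>)) V"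
    unfolding spatial_part_def by (rule openin_topology_generated_by)
  then show "\<exists>a::'a. V = phi a \<inter> YL TYPE('a)"
  proof induction
    case Empty
    show ?case
      by (rule exI[of _ bot]) (simp add: phi_bot)
  next
    case (Int u v)
    then obtain a b :: 'a where "u = phi a \<inter> YL TYPE('a)" "v = phi b \<inter> YL TYPE('a)"
      by blast
    then show ?case
      by (intro exI[of _ "inf a b"]) (auto simp: phi_inf)
  next
    case (UN K)
    define A where "A = {a::'a. phi a \<inter> YL TYPE('a) \<in> K}"
    have "\<Union>K = \<Union>((\<lambda>a. phi a \<inter> YL TYPE('a)) ` A)"
      using UN.IH unfolding A_def by blast
    also have "\<dots> = phi (Sup A) \<inter> YL TYPE('a)"
      unfolding phi_inter_YL[OF fr] by (auto simp: completely_prime_filter_Sup_iff)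
    finally show ?case
      by blast
  next
    case (Basis s)
    then show ?case
      by (auto simp: ClopUp_XL[OF fr])
  qed
next
  assume "\<exists>a::'a. V = phi a \<inter> YL TYPE('a)"
  then show "openin (spatial_part (XL TYPE('a)) (\<subseteq>)) V"
    unfolding spatial_part_def ClopUp_XL[OF fr] by (auto intro: topology_generated_by_Basis)
qed

lemma phi_inter_YL_subset_iff:
  assumes fr: "frame TYPE('a::complete_lattice)" and sp: "spatial_frame TYPE('a)"
  shows "phi a \<inter> YL TYPE('a) \<subseteq> phi b \<inter> YL TYPE('a) \<longleftrightarrow> (a::'a) \<le> b"
  unfolding phi_inter_YL[OF fr]
proof
  assume "{y. completely_prime_filter y \<and> a \<in> y} \<subseteq> {y. completely_prime_filter y \<and> b \<in> y}"
  then show "a \<le> b"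
    by (intro spatial_frame_leI[OF sp]) blast
next
  assume "a \<le> b"
  then show "{y. completely_prime_filter y \<and> a \<in> y} \<subseteq> {y. completely_prime_filter y \<and> b \<in> y}"
    using completely_prime_filter_imp_prime prime_filter_up by blast
qed

lemma YL_subset_Union_phi_iff:
  assumes fr: "frame TYPE('a::complete_lattice)" and sp: "spatial_frame TYPE('a)"
  shows "YL TYPE('a) \<subseteq> \<Union>((\<lambda>a. phi a \<inter> YL TYPE('a)) ` A) \<longleftrightarrow> top \<le> Sup (A::'a set)"
proof -
  have Union_eq: "\<Union>((\<lambda>a. phi a \<inter> YL TYPE('a)) ` A) = phi (Sup A) \<inter> YL TYPE('a)"
    unfolding phi_inter_YL[OF fr] by (auto simp: completely_prime_filter_Sup_iff)
  have top_eq: "phi top \<inter> YL TYPE('a) = YL TYPE('a)"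
    unfolding YL_eq[OF fr] phi_def
    by (auto intro: prime_filter_top completely_prime_filter_imp_prime)
  show ?thesis
    unfolding Union_eq phi_inter_YL_subset_iff[OF fr sp, of top "Sup A", symmetric] top_eq ..
qed

lemma compact_frame_if_compact_spatial_part_XL:
  assumes fr: "frame TYPE('a::complete_lattice)" and sp: "spatial_frame TYPE('a)"
    and comp: "compact_space (spatial_part (XL TYPE('a)) (\<subseteq>))"
  shows "compact_frame TYPE('a)"
  unfolding compact_frame_def way_below_def
proof (intro allI impI)
  fix A :: "'a set" assume "top \<le> Sup A"
  then have "YL TYPE('a) \<subseteq> \<Union>((\<lambda>a. phi a \<inter> YL TYPE('a)) ` A)"
    by (rule YL_subset_Union_phi_iff[OF fr sp, THEN iffD2])
  moreover have "compactin (spatial_part (XL TYPE('a)) (\<subseteq>)) (YL TYPE('a))"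
    using comp unfolding compact_space_def topspace_spatial_part_XL .
  moreover have "openin (spatial_part (XL TYPE('a)) (\<subseteq>)) (phi a \<inter> YL TYPE('a))" for a :: 'a
    using openin_spatial_part_XL_iff[OF fr] by blast
  ultimately have "\<exists>T\<subseteq>A. finite T \<and> YL TYPE('a) \<subseteq> \<Union>((\<lambda>a. phi a \<inter> YL TYPE('a)) ` T)"
    by (intro compactin_indexed_cover)
  then show "\<exists>T. finite T \<and> T \<subseteq> A \<and> top \<le> Sup T"
    using YL_subset_Union_phi_iff[OF fr sp] by blast
qed

lemma compact_spatial_part_XL_if_compact_frame:
  assumes fr: "frame TYPE('a::complete_lattice)" and sp: "spatial_frame TYPE('a)"
    and cf: "compact_frame TYPE('a)"
  shows "compact_space (spatial_part (XL TYPE('a)) (\<subseteq>))"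
  unfolding compact_space_alt topspace_spatial_part_XL
proof (intro allI impI)
  fix \<U> assume \<U>: "(\<forall>U\<in>\<U>. openin (spatial_part (XL TYPE('a)) (\<subseteq>)) U) \<and> YL TYPE('a) \<subseteq> \<Union>\<U>"
  define A where "A = {a::'a. phi a \<inter> YL TYPE('a) \<in> \<U>}"
  have "\<U> \<subseteq> (\<lambda>a. phi a \<inter> YL TYPE('a)) ` A"
  proof
    fix U assume "U \<in> \<U>"
    then obtain a :: 'a where "U = phi a \<inter> YL TYPE('a)"
      using \<U> openin_spatial_part_XL_iff[OF fr] by blast
    then show "U \<in> (\<lambda>a. phi a \<inter> YL TYPE('a)) ` A"
      using \<open>U \<in> \<U>\<close> unfolding A_def by blast
  qed
  then have "top \<le> Sup A"
    using \<U> YL_subset_Union_phi_iff[OF fr sp, of A] by blast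
  then obtain T where T: "finite T" "T \<subseteq> A" "top \<le> Sup T"
    using cf unfolding compact_frame_def way_below_def by blast
  have "YL TYPE('a) \<subseteq> \<Union>((\<lambda>a. phi a \<inter> YL TYPE('a)) ` T)"
    using T(3) by (rule YL_subset_Union_phi_iff[OF fr sp, THEN iffD2])
  moreover have "(\<lambda>a. phi a \<inter> YL TYPE('a)) ` T \<subseteq> \<U>"
    using T(2) unfolding A_def by blast
  ultimately show "\<exists>\<F>. finite \<F> \<and> \<F> \<subseteq> \<U> \<and> YL TYPE('a) \<subseteq> \<Union>\<F>"
    using T(1) by blast
qed

lemma clopen_spatial_part_XL_phi:
  assumes fr: "frame TYPE('a::complete_lattice)" and c: "complemented (c::'a)"
  shows "clopen (spatial_part (XL TYPE('a)) (\<subseteq>)) (phi c \<inter> YL TYPE('a))"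
proof -
  have "YL TYPE('a) - phi c \<inter> YL TYPE('a) = phi (pseudocompl c) \<inter> YL TYPE('a)"
    using prime_filter_pseudocompl_iff[OF fr c] completely_prime_filter_imp_prime
    by (auto simp: YL_eq[OF fr] phi_def)
  then show ?thesis
    unfolding clopen_def closedin_def topspace_spatial_part_XL openin_spatial_part_XL_iff[OF fr]
    by (auto simp: spatial_points_def)
qed

lemma clopen_spatial_part_XL_iff:
  assumes fr: "frame TYPE('a::complete_lattice)" and sp: "spatial_frame TYPE('a)"
  shows "clopen (spatial_part (XL TYPE('a)) (\<subseteq>)) U \<longleftrightarrow>
    (\<exists>c::'a. complemented c \<and> U = phi c \<inter> YL TYPE('a))"
proof
  assume "clopen (spatial_part (XL TYPE('a)) (\<subseteq>)) U"
  then obtain c d :: 'a where c: "U = phi c \<inter> YL TYPE('a)" and d: "YL TYPE('a) - U = phi d \<inter> YL TYPE('a)"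
    unfolding clopen_def closedin_def topspace_spatial_part_XL openin_spatial_part_XL_iff[OF fr]
    by blast
  have "phi (inf c d) \<inter> YL TYPE('a) \<subseteq> phi bot \<inter> YL TYPE('a)"
    unfolding phi_inf phi_bot using c d by blast
  then have "inf c d = bot"
    by (simp only: phi_inter_YL_subset_iff[OF fr sp] bot_unique)
  moreover have "phi top \<inter> YL TYPE('a) \<subseteq> phi (sup c d) \<inter> YL TYPE('a)"
    unfolding phi_sup using c d by blast
  then have "top \<le> sup c d"
    by (simp only: phi_inter_YL_subset_iff[OF fr sp])
  ultimately show "\<exists>c::'a. complemented c \<and> U = phi c \<inter> YL TYPE('a)"
    using c complementedI by blast
qed (auto intro: clopen_spatial_part_XL_phi[OF fr])

lemma spatial_part_XL_dim_le_0_iff: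
  assumes fr: "frame TYPE('a::complete_lattice)" and sp: "spatial_frame TYPE('a)"
  shows "spatial_part (XL TYPE('a)) (\<subseteq>) dim_le 0 \<longleftrightarrow> zero_dim_frame TYPE('a)"
proof
  assume dim: "spatial_part (XL TYPE('a)) (\<subseteq>) dim_le 0"
  show "zero_dim_frame TYPE('a)"
    unfolding zero_dim_frame_iff
  proof (intro allI spatial_frame_leI[OF sp])
    fix a :: 'a and y assume y: "completely_prime_filter y" "a \<in> y"
    have "openin (spatial_part (XL TYPE('a)) (\<subseteq>)) (phi a \<inter> YL TYPE('a))"
      using openin_spatial_part_XL_iff[OF fr] by blast
    moreover have "y \<in> phi a \<inter> YL TYPE('a)"
      using y by (simp add: phi_inter_YL[OF fr])
    ultimately obtain U where "clopen (spatial_part (XL TYPE('a)) (\<subseteq>)) U" "y \<in> U" "U \<subseteq> phi a \<inter> YL TYPE('a)"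
      using dim unfolding dim_le_0_iff_clopen_nbhds by blast
    then obtain c where "complemented c" "y \<in> phi c \<inter> YL TYPE('a)" "c \<le> a"
      unfolding clopen_spatial_part_XL_iff[OF fr sp] using phi_inter_YL_subset_iff[OF fr sp] by blast
    then show "Sup {c. complemented c \<and> c \<le> a} \<in> y"
      using y(1) by (auto simp: phi_inter_YL[OF fr] completely_prime_filter_Sup_iff)
  qed
next
  assume zd: "zero_dim_frame TYPE('a)"
  show "spatial_part (XL TYPE('a)) (\<subseteq>) dim_le 0"
    unfolding dim_le_0_iff_clopen_nbhds
  proof (intro allI impI)
    fix W x assume "openin (spatial_part (XL TYPE('a)) (\<subseteq>)) W \<and> x \<in> W"
    then obtain a :: 'a where W: "W = phi a \<inter> YL TYPE('a)" and x: "completely_prime_filter x" "a \<in> x"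
      unfolding openin_spatial_part_XL_iff[OF fr] by (auto simp: phi_inter_YL[OF fr])
    then obtain c where c: "complemented c" "c \<le> a" "c \<in> x"
      using completely_prime_filter_complemented_below[OF zd] by blast
    have "x \<in> phi c \<inter> YL TYPE('a)"
      using x c by (simp add: phi_inter_YL[OF fr])
    moreover have "phi c \<inter> YL TYPE('a) \<subseteq> W"
      unfolding W using phi_mono[OF c(2)] by blast
    ultimately show "\<exists>U. clopen (spatial_part (XL TYPE('a)) (\<subseteq>)) U \<and> x \<in> U \<and> U \<subseteq> W"
      using clopen_spatial_part_XL_phi[OF fr c(1)] by blast
  qed
qed

lemma Hausdorff_space_spatial_part_XL:
  assumes fr: "frame TYPE('a::complete_lattice)" and zd: "zero_dim_frame TYPE('a)"
  shows "Hausdorff_space (spatial_part (XL TYPE('a)) (\<subseteq>))"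
proof (rule Hausdorff_space_if_clopen_separating)
  fix x y :: "'a set"
  assume "x \<in> topspace (spatial_part (XL TYPE('a)) (\<subseteq>))" "y \<in> topspace (spatial_part (XL TYPE('a)) (\<subseteq>))"
    and "\<not> x \<subseteq> y"
  then obtain a where x: "completely_prime_filter x" "a \<in> x" and y: "completely_prime_filter y" "a \<notin> y"
    by (auto simp: topspace_spatial_part_XL YL_eq[OF fr])
  obtain c where c: "complemented c" "c \<le> a" "c \<in> x"
    using completely_prime_filter_complemented_below[OF zd x] by blast
  have "c \<notin> y"
    using c(2) y completely_prime_filter_imp_prime prime_filter_up by blast
  then show "\<exists>U. clopen (spatial_part (XL TYPE('a)) (\<subseteq>)) U \<and> x \<in> U \<and> y \<notin> U"
    using clopen_spatial_part_XL_phi[OF fr c(1)] x(1) c(3) by (auto simp: phi_inter_YL[OF fr])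
qed

lemma stone_space_spatial_part_XL_iff:
  assumes fr: "frame TYPE('a::complete_lattice)" and sp: "spatial_frame TYPE('a)"
  shows "stone_space (spatial_part (XL TYPE('a)) (\<subseteq>)) \<longleftrightarrow> stone_frame TYPE('a)"
  unfolding stone_space_def stone_frame_def
  using compact_frame_if_compact_spatial_part_XL[OF fr sp] compact_spatial_part_XL_if_compact_frame[OF fr sp]
    spatial_part_XL_dim_le_0_iff[OF fr sp]
    Hausdorff_space_spatial_part_XL[OF fr]
  by blast

theorem corollary5p18:
  assumes "frame TYPE('a::complete_lattice)"
  shows "(stone_frame TYPE('a) \<longleftrightarrow> stone_L_space (XL TYPE('a)) (\<subseteq>))
    \<and> (spatial_frame TYPE('a) \<longrightarrow>
         (stone_frame TYPE('a) \<longleftrightarrow> stone_space (spatial_part (XL TYPE('a)) (\<subseteq>))))"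
  using stone_L_space_XL_iff[OF assms] stone_space_spatial_part_XL_iff[OF assms] by blast

end
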